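(* Let $G$ be the directed graph on nodes $v_1,\dots,v_n$ with edges $(v_i,v_{i+1})$ for $1\le i\le n-1$ and $(v_i,v_j)$ for all $1\le j<i\le n$. Let $q=1/\sqrt n$. There is an absolute constant $c>0$ such that the convergence time of the \textsc{Random Pick} process on $G$ started from a $q$-random state is at least $c/(q\ln n)^2=c\,n/(\ln n)^2$ with probability $1-o(1)$ as $n\to\infty$.
   Context: In a $q$-random state each node is independently colored (red or blue, arbitrarily) with probability $q$ and uncolored otherwise. \textsc{Random Pick} process: in each round every node with at least one out-neighbor picks an out-neighbor uniformly at random, independently; an uncolored node adopts the color of its pick if the pick is colored, and all other nodes keep their color. A state is stable if no uncolored node has a colored out-neighbor; the convergence time is the first round $t\ge0$ at which the state is stable. *)

theory Defs
  imports "HOL-Probability.Probability"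
begin

datatype color = Red | Blue

type_synonym state = "nat \<Rightarrow> color option"

definition G_nodes :: "nat \<Rightarrow> nat set" where
  "G_nodes n = {1..n}"

definition G_out :: "nat \<Rightarrow> nat \<Rightarrow> nat set" where
  "G_out n i = {j. (1 \<le> i \<and> i \<le> n - 1 \<and> j = i + 1) \<or> (1 \<le> j \<and> j < i \<and> i \<le> n)}"

definition stable :: "nat set \<Rightarrow> (nat \<Rightarrow> nat set) \<Rightarrow> state \<Rightarrow> bool" where
  "stable V out s \<longleftrightarrow> (\<forall>v\<in>V. s v = None \<longrightarrow> (\<forall>u\<in>out v. s u = None))"

definition random_pick_step :: "nat set \<Rightarrow> (nat \<Rightarrow> nat set) \<Rightarrow> state \<Rightarrow> state pmf" where
  "random_pick_step V out s =
     map_pmf (\<lambda>pick v. if v \<in> V \<and> out v \<noteq> {} \<and> s v = None then s (pick v) else s v)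
       (Pi_pmf {v\<in>V. out v \<noteq> {}} 0 (\<lambda>v. pmf_of_set (out v)))"

definition q_random_state :: "nat set \<Rightarrow> real \<Rightarrow> (nat \<Rightarrow> color) \<Rightarrow> state pmf" where
  "q_random_state V q col =
     Pi_pmf V None (\<lambda>v. map_pmf (\<lambda>b. if b then Some (col v) else None) (bernoulli_pmf q))"

fun trajectory :: "nat set \<Rightarrow> (nat \<Rightarrow> nat set) \<Rightarrow> state pmf \<Rightarrow> nat \<Rightarrow> state list pmf" where
  "trajectory V out init 0 = map_pmf (\<lambda>s. [s]) init"
| "trajectory V out init (Suc t) =
     bind_pmf (trajectory V out init t)
       (\<lambda>xs. map_pmf (\<lambda>s'. xs @ [s']) (random_pick_step V out (last xs)))"

text \<open>Probability that the convergence time is at least the real number x, i.e. that none of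
  the states s_t with t < x is stable.\<close>
definition prob_conv_time_ge :: "nat set \<Rightarrow> (nat \<Rightarrow> nat set) \<Rightarrow> state pmf \<Rightarrow> real \<Rightarrow> real" where
  "prob_conv_time_ge V out init x =
     measure_pmf.prob (trajectory V out init (nat \<lceil>x\<rceil>))
       {xs. \<forall>t. real t < x \<longrightarrow> \<not> stable V out (xs ! t)}"

end

theory Submission
  imports Defs "HOL-Real_Asymp.Real_Asymp"
begin

text \<open>
  Let m be the first coloured node. All out-neighbours of a node before m other than its
  successor lie before m, so within one round m can only move to m - 1, which happens exactly
  when node m - 1 picks m, i.e. with probability 1/(m - 1). A state is stable iff m = 1 or no
  node is coloured. Take M \<approx> \<surd>n / (2 ln n) and N \<approx> n / (64 (ln n)^2). With
  q = 1/\<surd>n, the initial state has a coloured node and none among the first 2M nodes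
  with probability 1 - O(1/ln n). From m \<ge> 2M, reaching m \<le> M within N rounds has
  probability at most (1 + 1/M)^N / 2^M = O(1/ln n), by a supermartingale argument for the
  potential 2^(2M - max m M).
\<close>

lemma G_out_iff:
  "j \<in> G_out n i \<longleftrightarrow> (1 \<le> i \<and> i < n \<and> j = i + 1) \<or> (1 \<le> j \<and> j < i \<and> i \<le> n)"
  unfolding G_out_def by auto

lemma finite_G_out: "finite (G_out n i)"
  by (rule finite_subset[of _ "{1..n}"]) (auto simp: G_out_iff)

lemma G_out_before:
  assumes "2 \<le> m" "m \<le> n"
  shows "G_out n (m - 1) = insert m {1..<m - 1}"
  using assms by (auto simp: G_out_iff)

text \<open>The value n + 1 encodes that none of the nodes 1..n is coloured.\<close>
definition first_colored :: "nat \<Rightarrow> state \<Rightarrow> nat" where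
  "first_colored n s = (LEAST i. 1 \<le> i \<and> (i \<le> n \<longrightarrow> s i \<noteq> None))"

lemma first_colored_spec:
  "1 \<le> first_colored n s \<and> (first_colored n s \<le> n \<longrightarrow> s (first_colored n s) \<noteq> None)"
  unfolding first_colored_def by (rule LeastI[of _ "n + 1"]) auto

lemma first_colored_ge_1: "1 \<le> first_colored n s"
  using first_colored_spec by blast

lemma first_colored_colored: "first_colored n s \<le> n \<Longrightarrow> s (first_colored n s) \<noteq> None"
  using first_colored_spec by blast

lemma first_colored_le: "first_colored n s \<le> n + 1"
  unfolding first_colored_def by (rule Least_le) auto

lemma uncolored_before_first_colored:
  assumes "1 \<le> i" "i < first_colored n s"
  shows "s i = None"
  using not_less_Least[OF assms(2)[unfolded first_colored_def]] assms(1) by auto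

lemma first_colored_eqI:
  assumes "1 \<le> a" "a \<le> n + 1" "a \<le> n \<Longrightarrow> s a \<noteq> None"
    and "\<And>i. 1 \<le> i \<Longrightarrow> i < a \<Longrightarrow> s i = None"
  shows "first_colored n s = a"
  unfolding first_colored_def
proof (rule Least_equality)
  fix i assume "1 \<le> i \<and> (i \<le> n \<longrightarrow> s i \<noteq> None)"
  then show "a \<le> i" using assms(2) assms(4)[of i] by fastforce
qed (use assms in auto)

lemma first_colored_eq_Suc_iff: "first_colored n s = n + 1 \<longleftrightarrow> (\<forall>i\<in>{1..n}. s i = None)"
proof
  assume "first_colored n s = n + 1"
  then show "\<forall>i\<in>{1..n}. s i = None" using uncolored_before_first_colored[of _ n s] by auto
qed (auto intro: first_colored_eqI)

lemma stableD: "stable V out s \<Longrightarrow> v \<in> V \<Longrightarrow> s v = None \<Longrightarrow> u \<in> out v \<Longrightarrow> s u = None"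
  unfolding stable_def by blast

lemma stable_first_colored:
  assumes "stable (G_nodes n) (G_out n) s"
  shows "first_colored n s = 1 \<or> first_colored n s = n + 1"
proof (rule ccontr)
  let ?m = "first_colored n s"
  assume "\<not> ?thesis"
  then have m: "2 \<le> ?m" "?m \<le> n" using first_colored_ge_1[of n s] first_colored_le[of n s] by auto
  have "s (?m - 1) = None" using m by (intro uncolored_before_first_colored[of _ n]) auto
  moreover have "?m - 1 \<in> G_nodes n" "?m \<in> G_out n (?m - 1)" using m by (auto simp: G_nodes_def G_out_iff)
  ultimately have "s ?m = None" using stableD[OF assms] by blast
  then show False using first_colored_colored[OF m(2)] by contradiction
qed

definition pick_pmf :: "nat set \<Rightarrow> (nat \<Rightarrow> nat set) \<Rightarrow> (nat \<Rightarrow> nat) pmf" where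
  "pick_pmf V out = Pi_pmf {v\<in>V. out v \<noteq> {}} 0 (\<lambda>v. pmf_of_set (out v))"

definition pick_update :: "nat set \<Rightarrow> (nat \<Rightarrow> nat set) \<Rightarrow> state \<Rightarrow> (nat \<Rightarrow> nat) \<Rightarrow> state"
  where "pick_update V out s pick v =
    (if v \<in> V \<and> out v \<noteq> {} \<and> s v = None then s (pick v) else s v)"

lemma random_pick_step_eq: "random_pick_step V out s = map_pmf (pick_update V out s) (pick_pmf V out)"
  by (simp add: random_pick_step_def pick_update_def[abs_def] pick_pmf_def)

lemma pick_in_out:
  assumes "finite V" "finite (out v)" "pick \<in> set_pmf (pick_pmf V out)" "v \<in> V" "out v \<noteq> {}"
  shows "pick v \<in> out v"
proof -
  have "\<forall>x. x \<in> {v\<in>V. out v \<noteq> {}} \<longrightarrow> pick x \<in> set_pmf (pmf_of_set (out x))"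
    using assms(1,3) by (simp add: pick_pmf_def set_Pi_pmf PiE_dflt_def)
  then have "pick v \<in> set_pmf (pmf_of_set (out v))"
    using assms(4,5) by blast
  then show ?thesis using assms by simp
qed

lemma map_pmf_pick_pmf:
  assumes "finite V" "v \<in> V" "out v \<noteq> {}"
  shows "map_pmf (\<lambda>pick. pick v) (pick_pmf V out) = pmf_of_set (out v)"
  using assms by (simp add: pick_pmf_def Pi_pmf_component)

lemma pick_update_before_first_colored:
  fixes n :: nat and s :: state and pick :: "nat \<Rightarrow> nat"
  defines "m \<equiv> first_colored n s"
  assumes pick: "\<And>v. v \<in> G_nodes n \<Longrightarrow> G_out n v \<noteq> {} \<Longrightarrow> pick v \<in> G_out n v"
    and i: "1 \<le> i" "i < m"
  shows "pick_update (G_nodes n) (G_out n) s pick i \<noteq> None \<longleftrightarrow> i = m - 1 \<and> m \<le> n \<and> pick i = m"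
proof -
  let ?s' = "pick_update (G_nodes n) (G_out n) s pick"
  have before: "s j = None" if "1 \<le> j" "j < m" for j
    using that unfolding m_def by (rule uncolored_before_first_colored)
  have at: "s m \<noteq> None" if "m \<le> n"
    using that first_colored_colored unfolding m_def by blast
  show ?thesis
  proof (cases "i \<in> G_nodes n \<and> G_out n i \<noteq> {}")
    case True
    then have s'i: "?s' i = s (pick i)" using before i by (simp add: pick_update_def)
    from pick[of i] True consider "pick i = i + 1" "i < n" | "1 \<le> pick i" "pick i < i"
      by (auto simp: G_out_iff)
    then show ?thesis
    proof cases
      case 1
      then show ?thesis using s'i i at before[of "i + 1"] by (cases "i + 1 = m") auto
    next
      case 2
      then show ?thesis using s'i i before[of "pick i"] by auto
    qed
  next
    case False
    then have "?s' i = None" using before[OF i] by (auto simp: pick_update_def)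
    moreover have "\<not> (i = m - 1 \<and> m \<le> n)"
    proof
      assume "i = m - 1 \<and> m \<le> n"
      then have "i \<in> G_nodes n" "m \<in> G_out n i" using i by (auto simp: G_nodes_def G_out_iff)
      then show False using False by auto
    qed
    ultimately show ?thesis by auto
  qed
qed

lemma first_colored_pick_update:
  fixes n :: nat and s :: state and pick :: "nat \<Rightarrow> nat"
  defines "m \<equiv> first_colored n s"
  assumes pick: "\<And>v. v \<in> G_nodes n \<Longrightarrow> G_out n v \<noteq> {} \<Longrightarrow> pick v \<in> G_out n v"
  shows "first_colored n (pick_update (G_nodes n) (G_out n) s pick)
           = (if 2 \<le> m \<and> m \<le> n \<and> pick (m - 1) = m then m - 1 else m)"
proof -
  let ?s' = "pick_update (G_nodes n) (G_out n) s pick"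
  have below: "?s' i \<noteq> None \<longleftrightarrow> i = m - 1 \<and> m \<le> n \<and> pick i = m" if "1 \<le> i" "i < m" for i
    using pick_update_before_first_colored[OF pick that[unfolded m_def]] unfolding m_def .
  have m1: "1 \<le> m" "m \<le> n + 1"
    unfolding m_def by (rule first_colored_ge_1, rule first_colored_le)
  show ?thesis
  proof (cases "2 \<le> m \<and> m \<le> n \<and> pick (m - 1) = m")
    case True
    have "1 \<le> m - 1" "m - 1 < m" using True by auto
    from below[OF this] have "?s' (m - 1) \<noteq> None" using True by simp
    moreover have "?s' i = None" if "1 \<le> i" "i < m - 1" for i using below[of i] that by simp
    ultimately have "first_colored n ?s' = m - 1" using True by (intro first_colored_eqI) auto
    then show ?thesis using True by simp
  next
    case False
    have "s m \<noteq> None" if "m \<le> n" using that first_colored_colored unfolding m_def by blast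
    then have "?s' m \<noteq> None" if "m \<le> n" using that by (auto simp: pick_update_def)
    moreover have "?s' i = None" if "1 \<le> i" "i < m" for i
      using below[of i] that False by (cases "i = m - 1") auto
    ultimately have "first_colored n ?s' = m" using m1 by (intro first_colored_eqI) auto
    then show ?thesis using False by auto
  qed
qed

lemma first_colored_step:
  fixes n :: nat and s :: state
  defines "m \<equiv> first_colored n s"
  shows "map_pmf (first_colored n) (random_pick_step (G_nodes n) (G_out n) s)
     = (if 2 \<le> m \<and> m \<le> n
        then map_pmf (\<lambda>j. if j = m then m - 1 else m) (pmf_of_set (G_out n (m - 1)))
        else return_pmf m)"
proof -
  let ?P = "pick_pmf (G_nodes n) (G_out n)"
  have "map_pmf (first_colored n) (random_pick_step (G_nodes n) (G_out n) s)
      = map_pmf (\<lambda>pick. if 2 \<le> m \<and> m \<le> n \<and> pick (m - 1) = m then m - 1 else m) ?P"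
    unfolding random_pick_step_eq map_pmf_comp
  proof (rule map_pmf_cong[OF refl])
    fix pick assume pick: "pick \<in> set_pmf ?P"
    show "first_colored n (pick_update (G_nodes n) (G_out n) s pick)
        = (if 2 \<le> m \<and> m \<le> n \<and> pick (m - 1) = m then m - 1 else m)"
      unfolding m_def
      by (rule first_colored_pick_update, rule pick_in_out[OF _ _ pick])
         (auto simp: G_nodes_def finite_G_out)
  qed
  also have "\<dots> = (if 2 \<le> m \<and> m \<le> n
        then map_pmf (\<lambda>j. if j = m then m - 1 else m) (pmf_of_set (G_out n (m - 1)))
        else return_pmf m)"
  proof (cases "2 \<le> m \<and> m \<le> n")
    case True
    then have "m - 1 \<in> G_nodes n" "m \<in> G_out n (m - 1)" by (auto simp: G_nodes_def G_out_iff)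
    then have P: "map_pmf (\<lambda>pick. pick (m - 1)) ?P = pmf_of_set (G_out n (m - 1))"
      by (intro map_pmf_pick_pmf) (auto simp: G_nodes_def)
    have "map_pmf (\<lambda>pick. if 2 \<le> m \<and> m \<le> n \<and> pick (m - 1) = m then m - 1 else m) ?P
      = map_pmf (\<lambda>j. if j = m then m - 1 else m) (map_pmf (\<lambda>pick. pick (m - 1)) ?P)"
      using True by (simp add: map_pmf_comp)
    then show ?thesis using True by (simp only: P if_True simp_thms)
  next
    case False
    then have "(\<lambda>pick. if 2 \<le> m \<and> m \<le> n \<and> pick (m - 1) = m then m - 1 else m) = (\<lambda>_. m)"
      by auto
    then show ?thesis unfolding if_not_P[OF False] by simp
  qed
  finally show ?thesis .
qed

lemma first_colored_step_le:
  assumes "s' \<in> set_pmf (random_pick_step (G_nodes n) (G_out n) s)"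
  shows "first_colored n s' \<le> first_colored n s"
proof -
  have "first_colored n s' \<in> set_pmf (map_pmf (first_colored n) (random_pick_step (G_nodes n) (G_out n) s))"
    using assms by simp
  then show ?thesis unfolding first_colored_step by (auto split: if_splits)
qed

text \<open>The potential is constant for m \<le> M, and above M a step down at most doubles it and
  has probability at most 1/M; so it grows in expectation by a factor of at most 1 + 1/M per
  round, whereas a descent from 2M to M multiplies it by 2^M.\<close>
definition potential :: "nat \<Rightarrow> nat \<Rightarrow> real" where
  "potential M m = 2 ^ (2 * M - max m M)"

lemma potential_pos: "0 < potential M m"
  by (simp add: potential_def)

lemma potential_le: "potential M m \<le> 2 ^ (2 * M)"
  unfolding potential_def by (rule power_increasing) auto

lemma potential_pred_le: "potential M (m - 1) \<le> 2 * potential M m"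
proof -
  have "(2::real) ^ (2 * M - max (m - 1) M) \<le> 2 ^ Suc (2 * M - max m M)"
    by (rule power_increasing) auto
  then show ?thesis by (simp add: potential_def)
qed

lemma potential_average_le:
  assumes "1 \<le> M" "2 \<le> m"
  shows "(potential M (m - 1) + (real m - 2) * potential M m) / (real m - 1)
           \<le> (1 + 1 / real M) * potential M m"
proof -
  have "potential M (m - 1) + (real m - 2) * potential M m \<le> (1 + 1 / real M) * (real m - 1) * potential M m"
  proof (cases "M \<le> m - 1")
    case True
    have "potential M (m - 1) + (real m - 2) * potential M m \<le> real m * potential M m"
      using potential_pred_le[of M m] by (simp add: algebra_simps)
    also have "\<dots> \<le> (1 + 1 / real M) * (real m - 1) * potential M m"
      using True assms potential_pos[of M m] by (intro mult_right_mono) (auto simp: field_simps)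
    finally show ?thesis .
  next
    case False
    then have "potential M (m - 1) = potential M m" by (simp add: potential_def max_def)
    then show ?thesis using assms potential_pos[of M m] by (simp add: field_simps)
  qed
  then show ?thesis using assms by (simp add: pos_divide_le_eq mult_ac)
qed

lemma expectation_potential_step:
  assumes "1 \<le> M"
  shows "measure_pmf.expectation (random_pick_step (G_nodes n) (G_out n) s)
           (\<lambda>s'. potential M (first_colored n s')) \<le> (1 + 1 / real M) * potential M (first_colored n s)"
proof -
  define m where "m = first_colored n s"
  have "measure_pmf.expectation (random_pick_step (G_nodes n) (G_out n) s) (\<lambda>s'. potential M (first_colored n s'))
      = measure_pmf.expectation (map_pmf (first_colored n) (random_pick_step (G_nodes n) (G_out n) s)) (potential M)"
    by simp
  also have "\<dots> \<le> (1 + 1 / real M) * potential M m"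
  proof (cases "2 \<le> m \<and> m \<le> n")
    case True
    then have m: "2 \<le> m" "m \<le> n" by auto
    have "(\<Sum>j\<in>G_out n (m - 1). potential M (if j = m then m - 1 else m))
        = potential M (m - 1) + (\<Sum>j\<in>{1..<m - 1}. potential M (if j = m then m - 1 else m))"
      unfolding G_out_before[OF m] by (subst sum.insert) auto
    also have "(\<Sum>j\<in>{1..<m - 1}. potential M (if j = m then m - 1 else m))
        = (\<Sum>j\<in>{1..<m - 1}. potential M m)"
      by (rule sum.cong) auto
    also have "\<dots> = (real m - 2) * potential M m"
      using m by simp
    finally have sum: "(\<Sum>j\<in>G_out n (m - 1). potential M (if j = m then m - 1 else m))
        = potential M (m - 1) + (real m - 2) * potential M m" .
    have card: "card (G_out n (m - 1)) = m - 1" and "G_out n (m - 1) \<noteq> {}"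
      using m unfolding G_out_before[OF m] by auto
    then have "measure_pmf.expectation (map_pmf (first_colored n) (random_pick_step (G_nodes n) (G_out n) s)) (potential M)
        = (\<Sum>j\<in>G_out n (m - 1). potential M (if j = m then m - 1 else m)) / card (G_out n (m - 1))"
      using m by (simp add: first_colored_step[of n s, folded m_def] integral_pmf_of_set finite_G_out)
    also have "\<dots> = (potential M (m - 1) + (real m - 2) * potential M m) / (real m - 1)"
      unfolding sum card using m by simp
    finally show ?thesis using potential_average_le[OF assms m(1)] by simp
  next
    case False
    then show ?thesis using potential_pos[of M m]
      unfolding first_colored_step[of n s, folded m_def] if_not_P[OF False] by simp
  qed
  finally show ?thesis by (simp add: m_def)
qed

lemma nn_integral_potential_step:
  assumes "1 \<le> M"
  shows "(\<integral>\<^sup>+s'. ennreal (potential M (first_colored n s')) \<partial>random_pick_step (G_nodes n) (G_out n) s)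
          \<le> ennreal (1 + 1 / real M) * ennreal (potential M (first_colored n s))"
proof -
  have "integrable (random_pick_step (G_nodes n) (G_out n) s) (\<lambda>s'. potential M (first_colored n s'))"
    by (rule measure_pmf.integrable_const_bound[where B = "2 ^ (2 * M)"])
       (auto simp: potential_le abs_of_pos[OF potential_pos])
  then have "(\<integral>\<^sup>+s'. ennreal (potential M (first_colored n s')) \<partial>random_pick_step (G_nodes n) (G_out n) s)
      = ennreal (measure_pmf.expectation (random_pick_step (G_nodes n) (G_out n) s)
                   (\<lambda>s'. potential M (first_colored n s')))"
    by (rule nn_integral_eq_integral) (simp add: less_imp_le[OF potential_pos])
  also have "\<dots> \<le> ennreal ((1 + 1 / real M) * potential M (first_colored n s))"
    by (intro ennreal_leI expectation_potential_step assms)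
  also have "\<dots> = ennreal (1 + 1 / real M) * ennreal (potential M (first_colored n s))"
    by (rule ennreal_mult) (auto simp: less_imp_le[OF potential_pos])
  finally show ?thesis .
qed

lemma length_trajectory: "xs \<in> set_pmf (trajectory V out init t) \<Longrightarrow> length xs = Suc t"
  by (induction t arbitrary: xs) auto

lemma trajectory_Suc_nth:
  assumes "xs \<in> set_pmf (trajectory V out init t)" "k < t"
  shows "xs ! Suc k \<in> set_pmf (random_pick_step V out (xs ! k))"
  using assms
proof (induction t arbitrary: xs)
  case (Suc t)
  then obtain ys s' where ys: "ys \<in> set_pmf (trajectory V out init t)" and xs: "xs = ys @ [s']"
    and s': "s' \<in> set_pmf (random_pick_step V out (last ys))"
    by auto
  have len: "length ys = Suc t" using length_trajectory[OF ys] .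
  show ?case
  proof (cases "k < t")
    case True
    then show ?thesis using Suc.IH[OF ys True] len xs by (simp add: nth_append)
  next
    case False
    then have "k = t" using Suc.prems(2) by simp
    moreover have "last ys = ys ! t" using len by (cases ys rule: rev_cases) auto
    ultimately show ?thesis using s' len xs by (simp add: nth_append)
  qed
qed simp

lemma trajectory_antimono:
  fixes f :: "state \<Rightarrow> 'a :: preorder"
  assumes step: "\<And>s s'. s' \<in> set_pmf (random_pick_step V out s) \<Longrightarrow> f s' \<le> f s"
    and xs: "xs \<in> set_pmf (trajectory V out init t)" and "i \<le> j" "j \<le> t"
  shows "f (xs ! j) \<le> f (xs ! i)"
  using \<open>i \<le> j\<close> \<open>j \<le> t\<close>
proof (induction j rule: dec_induct)
  case (step k)
  then have "f (xs ! Suc k) \<le> f (xs ! k)" using assms(1) trajectory_Suc_nth[OF xs] by simp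
  then show ?case using step by (meson order_trans Suc_leD)
qed simp

lemma map_pmf_trajectory_hd: "map_pmf (\<lambda>xs. xs ! 0) (trajectory V out init t) = init"
proof (induction t)
  case (Suc t)
  let ?T = "trajectory V out init t"
  have "map_pmf (\<lambda>xs. xs ! 0) (trajectory V out init (Suc t))
      = bind_pmf ?T (\<lambda>xs. map_pmf (\<lambda>s'. (xs @ [s']) ! 0) (random_pick_step V out (last xs)))"
    by (simp add: map_bind_pmf map_pmf_comp)
  also have "\<dots> = bind_pmf ?T (\<lambda>xs. return_pmf (xs ! 0))"
  proof (rule bind_pmf_cong[OF refl])
    fix xs assume "xs \<in> set_pmf ?T"
    then have "xs \<noteq> []" using length_trajectory by fastforce
    then show "map_pmf (\<lambda>s'. (xs @ [s']) ! 0) (random_pick_step V out (last xs)) = return_pmf (xs ! 0)"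
      by (simp add: nth_append)
  qed
  finally show ?case using Suc.IH by (simp add: map_pmf_def)
qed (simp add: map_pmf_comp)

lemma prob_trajectory_hd:
  "measure_pmf.prob (trajectory V out init t) {xs. P (xs ! 0)} = measure_pmf.prob init {s. P s}"
  using arg_cong[OF map_pmf_trajectory_hd, of "\<lambda>p. measure_pmf.prob p {s. P s}"] by (simp add: vimage_def)

text \<open>The weight h on the initial state is what allows conditioning on it.\<close>
lemma nn_integral_trajectory_le:
  assumes step: "\<And>s. (\<integral>\<^sup>+s'. g s' \<partial>random_pick_step V out s) \<le> c * g s"
  shows "(\<integral>\<^sup>+xs. h (xs ! 0) * g (last xs) \<partial>trajectory V out init t)
           \<le> c ^ t * (\<integral>\<^sup>+s. h s * g s \<partial>init)"
proof (induction t)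
  case (Suc t)
  let ?T = "trajectory V out init t"
  have "(\<integral>\<^sup>+xs. h (xs ! 0) * g (last xs) \<partial>trajectory V out init (Suc t))
      = (\<integral>\<^sup>+xs. \<integral>\<^sup>+s'. h ((xs @ [s']) ! 0) * g s' \<partial>random_pick_step V out (last xs) \<partial>?T)"
    by simp
  also have "\<dots> = (\<integral>\<^sup>+xs. h (xs ! 0) * (\<integral>\<^sup>+s'. g s' \<partial>random_pick_step V out (last xs)) \<partial>?T)"
  proof (rule nn_integral_cong_AE, unfold AE_measure_pmf_iff, intro ballI)
    fix xs assume "xs \<in> set_pmf ?T"
    then have "xs \<noteq> []" using length_trajectory by fastforce
    then show "(\<integral>\<^sup>+s'. h ((xs @ [s']) ! 0) * g s' \<partial>random_pick_step V out (last xs))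
        = h (xs ! 0) * (\<integral>\<^sup>+s'. g s' \<partial>random_pick_step V out (last xs))"
      by (simp add: nth_append nn_integral_cmult)
  qed
  also have "\<dots> \<le> (\<integral>\<^sup>+xs. c * (h (xs ! 0) * g (last xs)) \<partial>?T)"
    by (intro nn_integral_mono) (metis step mult.left_commute mult_left_mono zero_le)
  also have "\<dots> = c * (\<integral>\<^sup>+xs. h (xs ! 0) * g (last xs) \<partial>?T)"
    by (simp add: nn_integral_cmult)
  also have "\<dots> \<le> c * (c ^ t * (\<integral>\<^sup>+s. h s * g s \<partial>init))"
    by (intro mult_left_mono Suc.IH) simp
  finally show ?case by (simp add: mult.assoc)
qed simp

lemma prob_first_colored_descent_le:
  assumes "1 \<le> M"
  shows "measure_pmf.prob (trajectory (G_nodes n) (G_out n) init N)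
           {xs. 2 * M \<le> first_colored n (xs ! 0) \<and> first_colored n (last xs) \<le> M}
         \<le> (1 + 1 / real M) ^ N / 2 ^ M"
proof -
  let ?T = "trajectory (G_nodes n) (G_out n) init N"
  let ?A = "{xs. 2 * M \<le> first_colored n (xs ! 0) \<and> first_colored n (last xs) \<le> M}"
  define h :: "state \<Rightarrow> ennreal" where "h = indicator {s. 2 * M \<le> first_colored n s}"
  define g where "g s = ennreal (potential M (first_colored n s))" for s
  have hg: "(\<integral>\<^sup>+s. h s * g s \<partial>init) \<le> 1"
  proof -
    have "(\<integral>\<^sup>+s. h s * g s \<partial>init) \<le> (\<integral>\<^sup>+s. 1 \<partial>init)"
      by (intro nn_integral_mono) (auto simp: h_def g_def potential_def indicator_def)
    then show ?thesis by simp
  qed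
  have "ennreal (2 ^ M * measure_pmf.prob ?T ?A) = (\<integral>\<^sup>+xs. ennreal (2 ^ M) * indicator ?A xs \<partial>?T)"
    by (simp add: nn_integral_cmult_indicator ennreal_mult measure_pmf.emeasure_eq_measure)
  also have "\<dots> \<le> (\<integral>\<^sup>+xs. h (xs ! 0) * g (last xs) \<partial>?T)"
    by (intro nn_integral_mono) (auto simp: h_def g_def potential_def max_def indicator_def)
  also have "\<dots> \<le> ennreal (1 + 1 / real M) ^ N * (\<integral>\<^sup>+s. h s * g s \<partial>init)"
    unfolding g_def by (rule nn_integral_trajectory_le, rule nn_integral_potential_step[OF assms])
  also have "\<dots> \<le> ennreal (1 + 1 / real M) ^ N * 1"
    by (intro mult_left_mono hg) simp
  also have "\<dots> = ennreal ((1 + 1 / real M) ^ N)"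
    unfolding mult_1_right by (rule ennreal_power) simp
  finally have "2 ^ M * measure_pmf.prob ?T ?A \<le> (1 + 1 / real M) ^ N"
    by (subst (asm) ennreal_le_iff) auto
  then show ?thesis by (simp add: field_simps)
qed

lemma map_pmf_q_random_state_node:
  assumes "finite V" "v \<in> V"
  shows "map_pmf (\<lambda>s. s v) (q_random_state V q col)
           = map_pmf (\<lambda>b. if b then Some (col v) else None) (bernoulli_pmf q)"
  using assms by (simp add: q_random_state_def Pi_pmf_component)

lemma prob_q_random_state_colored:
  assumes "0 \<le> q" "q \<le> 1" "finite V" "v \<in> V"
  shows "measure_pmf.prob (q_random_state V q col) {s. s v \<noteq> None} = q"
proof -
  have "(\<lambda>b. if b then Some (col v) else None) -` {x. x \<noteq> None} = {True}" by auto
  then have "measure_pmf.prob (map_pmf (\<lambda>s. s v) (q_random_state V q col)) {x. x \<noteq> None} = q"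
    using assms by (simp add: map_pmf_q_random_state_node measure_pmf_single)
  then show ?thesis by (simp add: vimage_def)
qed

lemma prob_q_random_state_uncolored:
  assumes "0 \<le> q" "q \<le> 1" "finite V"
  shows "measure_pmf.prob (q_random_state V q col) {s. \<forall>v\<in>V. s v = None} = (1 - q) ^ card V"
proof -
  have eq: "{s. \<forall>v\<in>V. s v = None} = Pi V (\<lambda>_. {None})" by (auto simp: Pi_def)
  have "measure_pmf.prob (map_pmf (\<lambda>b. if b then Some (col v) else None) (bernoulli_pmf q)) {None} = 1 - q"
    for v
  proof -
    have "(\<lambda>b. if b then Some (col v) else None) -` {None} = {False}" by auto
    then show ?thesis using assms by (simp only: measure_map_pmf) (simp add: measure_pmf_single)
  qed
  then show ?thesis
    unfolding q_random_state_def eq measure_Pi_pmf_Pi[OF assms(3)] by simp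
qed

lemma prob_first_colored_less_le:
  assumes "0 \<le> q" "q \<le> 1" "k \<le> n + 1"
  shows "measure_pmf.prob (q_random_state (G_nodes n) q col) {s. first_colored n s < k} \<le> real (k - 1) * q"
proof -
  let ?I = "q_random_state (G_nodes n) q col"
  have "{s. first_colored n s < k} \<subseteq> (\<Union>v\<in>{1..<k}. {s. s v \<noteq> None})"
  proof
    fix s assume "s \<in> {s. first_colored n s < k}"
    then show "s \<in> (\<Union>v\<in>{1..<k}. {s. s v \<noteq> None})"
      using assms(3) first_colored_ge_1[of n s] first_colored_colored[of n s] by auto
  qed
  then have "measure_pmf.prob ?I {s. first_colored n s < k}
      \<le> measure_pmf.prob ?I (\<Union>v\<in>{1..<k}. {s. s v \<noteq> None})"
    by (rule measure_pmf.finite_measure_mono) simp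
  also have "\<dots> \<le> (\<Sum>v\<in>{1..<k}. measure_pmf.prob ?I {s. s v \<noteq> None})"
    by (rule measure_pmf.finite_measure_subadditive_finite) auto
  also have "\<dots> = (\<Sum>v\<in>{1..<k}. q)"
    using assms by (intro sum.cong refl prob_q_random_state_colored) (auto simp: G_nodes_def)
  finally show ?thesis by simp
qed

lemma prob_first_colored_none:
  assumes "0 \<le> q" "q \<le> 1"
  shows "measure_pmf.prob (q_random_state (G_nodes n) q col) {s. first_colored n s = n + 1} = (1 - q) ^ n"
  unfolding first_colored_eq_Suc_iff using prob_q_random_state_uncolored[OF assms, of "G_nodes n" col]
  by (simp add: G_nodes_def)

lemma stable_within_cases:
  assumes xs: "xs \<in> set_pmf (trajectory (G_nodes n) (G_out n) init N)"
    and "t \<le> N" "stable (G_nodes n) (G_out n) (xs ! t)" "1 \<le> M"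
  shows "first_colored n (xs ! 0) < 2 * M \<or> first_colored n (xs ! 0) = n + 1
     \<or> 2 * M \<le> first_colored n (xs ! 0) \<and> first_colored n (last xs) \<le> M"
proof -
  have mono: "first_colored n (xs ! j) \<le> first_colored n (xs ! i)" if "i \<le> j" "j \<le> N" for i j
    using trajectory_antimono[OF first_colored_step_le xs that] .
  have "last xs = xs ! N"
    using length_trajectory[OF xs] by (cases xs rule: rev_cases) auto
  then show ?thesis
    using stable_first_colored[OF assms(3)] mono[of t N] mono[of 0 t] assms(2,4)
      first_colored_le[of n "xs ! 0"] by auto
qed

lemma prob_stable_within_le:
  assumes "1 \<le> M" "2 * M \<le> n" "0 \<le> q" "q \<le> 1"
  shows "measure_pmf.prob (trajectory (G_nodes n) (G_out n) (q_random_state (G_nodes n) q col) N)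
           {xs. \<exists>t\<le>N. stable (G_nodes n) (G_out n) (xs ! t)}
         \<le> 2 * M * q + (1 - q) ^ n + (1 + 1 / real M) ^ N / 2 ^ M"
proof -
  define I where "I = q_random_state (G_nodes n) q col"
  define T where "T = trajectory (G_nodes n) (G_out n) I N"
  define B1 where "B1 = {xs :: state list. first_colored n (xs ! 0) < 2 * M}"
  define B2 where "B2 = {xs :: state list. first_colored n (xs ! 0) = n + 1}"
  define A where "A = {xs. 2 * M \<le> first_colored n (xs ! 0) \<and> first_colored n (last xs) \<le> M}"
  have "measure_pmf.prob T {xs. \<exists>t\<le>N. stable (G_nodes n) (G_out n) (xs ! t)}
      \<le> measure_pmf.prob T (B1 \<union> B2 \<union> A)"
    using stable_within_cases[of _ n I N _ M] assms(1)
    by (intro measure_pmf.finite_measure_mono_AE) (auto simp: AE_measure_pmf_iff T_def B1_def B2_def A_def)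
  also have "\<dots> \<le> measure_pmf.prob T B1 + measure_pmf.prob T B2 + measure_pmf.prob T A"
    using measure_Un_le[of "B1 \<union> B2" T A] measure_Un_le[of B1 T B2] by simp
  also have "measure_pmf.prob T B1 \<le> 2 * M * q"
  proof -
    have "measure_pmf.prob T B1 = measure_pmf.prob I {s. first_colored n s < 2 * M}"
      unfolding T_def B1_def by (rule prob_trajectory_hd)
    also have "\<dots> \<le> real (2 * M - 1) * q"
      unfolding I_def using assms by (intro prob_first_colored_less_le) auto
    also have "\<dots> \<le> 2 * M * q" using assms by (intro mult_right_mono) auto
    finally show ?thesis .
  qed
  also have "measure_pmf.prob T B2 = (1 - q) ^ n"
  proof -
    have "measure_pmf.prob T B2 = measure_pmf.prob I {s. first_colored n s = n + 1}"
      unfolding T_def B2_def by (rule prob_trajectory_hd)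
    then show ?thesis unfolding I_def using prob_first_colored_none[OF assms(3,4)] by simp
  qed
  also have "measure_pmf.prob T A \<le> (1 + 1 / real M) ^ N / 2 ^ M"
    unfolding T_def A_def using assms(1) by (rule prob_first_colored_descent_le)
  finally show ?thesis by (simp add: T_def I_def)
qed

lemma prob_conv_time_ge_ge_compl_stable_within:
  "1 - measure_pmf.prob (trajectory V out init (nat \<lceil>x\<rceil>))
         {xs. \<exists>t\<le>nat \<lceil>x\<rceil>. stable V out (xs ! t)}
     \<le> prob_conv_time_ge V out init x"
proof -
  let ?T = "trajectory V out init (nat \<lceil>x\<rceil>)"
  let ?G = "{xs. \<forall>t. real t < x \<longrightarrow> \<not> stable V out (xs ! t)}"
  let ?S = "{xs. \<exists>t\<le>nat \<lceil>x\<rceil>. stable V out (xs ! t)}"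
  have "t \<le> nat \<lceil>x\<rceil>" if "real t < x" for t
    using that le_of_int_ceiling[of x] by linarith
  then have "UNIV - ?G \<subseteq> ?S"
    by auto
  then have "measure_pmf.prob ?T (UNIV - ?G) \<le> measure_pmf.prob ?T ?S"
    by (rule measure_pmf.finite_measure_mono) simp
  then show ?thesis
    using measure_pmf.prob_compl[of ?G ?T] unfolding prob_conv_time_ge_def by simp
qed

lemma exp_half_le_2: "exp (1 / 2 :: real) \<le> 2"
proof -
  have "1 / 2 \<le> ln (2 :: real)" using ln2_ge_two_thirds by linarith
  then have "exp (1 / 2) \<le> exp (ln (2 :: real))" by (simp only: exp_le_cancel_iff)
  then show ?thesis by simp
qed

lemma descent_tail_le_exp: "(1 + 1 / real M) ^ N / 2 ^ M \<le> exp (real N / real M - real M / 2)"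
proof -
  have "(1 + 1 / real M) ^ N \<le> exp (1 / real M) ^ N"
    by (intro power_mono) (auto simp: add.commute)
  also have "\<dots> = exp (real N / real M)" by (simp flip: exp_of_nat_mult)
  finally have num: "(1 + 1 / real M) ^ N \<le> exp (real N / real M)" .
  have "exp (real M / 2) = exp (1 / 2) ^ M" by (simp flip: exp_of_nat_mult)
  also have "\<dots> \<le> 2 ^ M" by (intro power_mono exp_half_le_2) simp
  finally have "(1 + 1 / real M) ^ N / 2 ^ M \<le> exp (real N / real M) / exp (real M / 2)"
    using num by (intro frac_le) auto
  then show ?thesis by (simp add: exp_diff)
qed

lemma descent_exponent_le:
  fixes a M N :: real
  assumes "8 \<le> a" "a - 1 \<le> M" "N \<le> a\<^sup>2 / 16 + 1"
  shows "N / M - M / 2 \<le> - a / 4"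
proof -
  have "64 \<le> a\<^sup>2" using power_mono[OF assms(1), of 2] by simp
  then have "N / M \<le> (5 / 64 * a\<^sup>2) / (7 / 8 * a)"
    using assms by (intro frac_le) auto
  also have "\<dots> = 5 / 56 * a" using assms(1) by (simp add: power2_eq_square)
  finally show ?thesis using assms by linarith
qed

definition large_enough :: "nat \<Rightarrow> bool" where
  "large_enough n \<longleftrightarrow> 2 \<le> n \<and> 8 \<le> sqrt n / (2 * ln n) \<and> exp (- sqrt n) \<le> 1 / ln n
     \<and> exp (- (sqrt n / (8 * ln n))) \<le> 1 / ln n \<and> sqrt n / ln n \<le> real n"

lemma descent_bounds_le:
  fixes L a q :: real and n M N :: nat
  assumes n: "1 \<le> n" and L: "0 < L" and a: "a = sqrt n / (2 * L)" "8 \<le> a"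
    and M: "a - 1 \<le> M" "M \<le> a" and N: "N \<le> a\<^sup>2 / 16 + 1" and q: "q = 1 / sqrt n"
    and e1: "exp (- sqrt n) \<le> 1 / L" and e2: "exp (- (sqrt n / (8 * L))) \<le> 1 / L"
  shows "2 * M * q + (1 - q) ^ n + (1 + 1 / real M) ^ N / 2 ^ M \<le> 3 / L"
proof -
  have sq: "1 \<le> sqrt n" "sqrt n * sqrt n = n" using n by auto
  have q01: "0 \<le> q" "q \<le> 1" using sq by (auto simp: q)
  have "2 * M * q \<le> 2 * a * q" using M q01 by (intro mult_right_mono) auto
  also have "\<dots> = 1 / L" using sq L by (simp add: a q field_simps)
  finally have "2 * M * q \<le> 1 / L" .
  moreover have "(1 - q) ^ n \<le> 1 / L"
  proof -
    have "(1 - q) ^ n \<le> exp (- q) ^ n"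
      using q01 exp_ge_add_one_self[of "- q"] by (intro power_mono) auto
    also have "\<dots> = exp (- sqrt n)" using sq by (simp add: q field_simps flip: exp_of_nat_mult)
    finally show ?thesis using e1 by simp
  qed
  moreover have "(1 + 1 / real M) ^ N / 2 ^ M \<le> 1 / L"
  proof -
    have "(1 + 1 / real M) ^ N / 2 ^ M \<le> exp (real N / real M - real M / 2)"
      by (rule descent_tail_le_exp)
    also have "\<dots> \<le> exp (- a / 4)"
      using descent_exponent_le[OF a(2) M(1) N] by simp
    also have "\<dots> = exp (- (sqrt n / (8 * L)))" by (simp add: a)
    finally show ?thesis using e2 by simp
  qed
  ultimately show ?thesis by simp
qed

lemma prob_conv_time_ge_G_large:
  fixes n :: nat
  assumes "large_enough n"
  shows "1 - 3 / ln n \<le> prob_conv_time_ge (G_nodes n) (G_out n)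
           (q_random_state (G_nodes n) (1 / sqrt n) col) (1 / 64 * real n / (ln n)\<^sup>2)"
proof -
  from assms have n: "2 \<le> n" and a8: "8 \<le> sqrt n / (2 * ln n)"
    and e: "exp (- sqrt n) \<le> 1 / ln n" "exp (- (sqrt n / (8 * ln n))) \<le> 1 / ln n"
    and small: "sqrt n / ln n \<le> n"
    unfolding large_enough_def by auto
  define L where "L = ln (real n)"
  define a where "a = sqrt n / (2 * L)"
  define M where "M = nat \<lfloor>a\<rfloor>"
  define x where "x = 1 / 64 * real n / L\<^sup>2"
  define N where "N = nat \<lceil>x\<rceil>"
  define q where "q = 1 / sqrt n"
  have L: "0 < L" using n by (simp add: L_def)
  have a: "8 \<le> a" using a8 by (simp add: a_def L_def)
  have M: "real M \<le> a" "a - 1 \<le> real M" using a by (auto simp: M_def)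
  then have M1: "1 \<le> M" using a by linarith
  have "2 * real M \<le> 2 * a" using M by simp
  also have "\<dots> = sqrt n / L" using L by (simp add: a_def)
  also have "\<dots> \<le> real n" using small by (simp add: L_def)
  finally have Mn: "2 * M \<le> n" by linarith
  have "0 \<le> x" by (simp add: x_def)
  then have "real N = of_int \<lceil>x\<rceil>" by (simp add: N_def)
  then have "real N \<le> x + 1" using ceiling_correct[of x] by linarith
  also have "x = a\<^sup>2 / 16" using L n by (simp add: x_def a_def power2_eq_square field_simps)
  finally have N: "real N \<le> a\<^sup>2 / 16 + 1" .
  have "q \<le> 1" using n by (simp add: q_def)
  then have "1 - (2 * M * q + (1 - q) ^ n + (1 + 1 / real M) ^ N / 2 ^ M)
      \<le> prob_conv_time_ge (G_nodes n) (G_out n) (q_random_state (G_nodes n) q col) x"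
    using prob_conv_time_ge_ge_compl_stable_within[of "G_nodes n" "G_out n" "q_random_state (G_nodes n) q col" x]
      prob_stable_within_le[OF M1 Mn _ \<open>q \<le> 1\<close>, of col N]
    unfolding N_def by (simp add: q_def)
  moreover have "2 * M * q + (1 - q) ^ n + (1 + 1 / real M) ^ N / 2 ^ M \<le> 3 / L"
    using n L a_def a M N q_def e unfolding L_def by (intro descent_bounds_le) auto
  ultimately show ?thesis by (simp add: x_def q_def L_def)
qed

lemma eventually_large_enough: "eventually large_enough sequentially"
proof -
  have "\<forall>\<^sub>F x in at_top. 2 \<le> x \<and> 8 \<le> sqrt x / (2 * ln x) \<and> exp (- sqrt x) \<le> 1 / ln x
     \<and> exp (- (sqrt x / (8 * ln x))) \<le> 1 / ln x \<and> sqrt x / ln x \<le> (x :: real)"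
    by (intro eventually_conj; real_asymp)
  from eventually_compose_filterlim[OF this filterlim_real_sequentially] show ?thesis
    unfolding large_enough_def[abs_def] by simp
qed

theorem mainTheorem14:
  shows "\<exists>c>0. \<exists>\<epsilon>::nat \<Rightarrow> real. \<epsilon> \<longlonglongrightarrow> 0 \<and>
    (\<forall>n (col :: nat \<Rightarrow> color).
       prob_conv_time_ge (G_nodes n) (G_out n)
          (q_random_state (G_nodes n) (1 / sqrt (real n)) col)
          (c * real n / (ln (real n))\<^sup>2) \<ge> 1 - \<epsilon> n)"
proof -
  define \<epsilon> where "\<epsilon> n = (if large_enough n then 3 / ln (real n) else 1)" for n
  have "\<epsilon> \<longlonglongrightarrow> 0"
  proof (rule Lim_transform_eventually)
    show "(\<lambda>n. 3 / ln (real n)) \<longlonglongrightarrow> 0" by real_asymp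
    show "\<forall>\<^sub>F n in sequentially. 3 / ln (real n) = \<epsilon> n"
      using eventually_large_enough by eventually_elim (simp add: \<epsilon>_def)
  qed
  moreover have "1 - \<epsilon> n \<le> prob_conv_time_ge (G_nodes n) (G_out n)
      (q_random_state (G_nodes n) (1 / sqrt (real n)) col) (1 / 64 * real n / (ln (real n))\<^sup>2)" for n col
  proof (cases "large_enough n")
    case True
    then show ?thesis using prob_conv_time_ge_G_large[of n col] by (simp add: \<epsilon>_def)
  next
    case False
    then show ?thesis by (simp add: \<epsilon>_def prob_conv_time_ge_def)
  qed
  ultimately show ?thesis by (intro exI[of _ "1 / 64"] exI[of _ \<epsilon>]) auto
qed

end
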